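(* Let $d, t$ be integers with $d \geq t-1$ and $t \geq 4$. Then \[ \mathrm{rb}(W_d, F_t) \ge \left\lfloor \frac{2t-5}{t-2}\, d \right\rfloor + 1, \] i.e., there is an edge-coloring of $W_d$ with exactly $\left\lfloor \frac{2t-5}{t-2} d \right\rfloor$ colors containing no rainbow subgraph isomorphic to $F_t$.
   Context: A subgraph of an edge-colored graph is rainbow if no two of its edges have the same color. For graphs $G$ and $H$, the rainbow number $\mathrm{rb}(G,H)$ is the minimum integer $k$ such that every edge-coloring of $G$ that uses at least $k$ distinct colors contains a rainbow subgraph isomorphic to $H$. $W_d$ is the wheel: a hub vertex adjacent to all vertices of a cycle $v_1\cdots v_dv_1$. The fan $F_t$ is obtained from a cycle $v_1v_2\cdots v_tv_1$ by adding all chords $v_1v_i$, $3 \le i \le t-1$. *)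

theory Defs
  imports Complex_Main
begin

text \<open>Simple graphs are given by a vertex set and a set of edges, each edge being a
two-element set of vertices. Vertices are natural numbers.\<close>

definition wheel_V :: "nat \<Rightarrow> nat set" where
  "wheel_V d = {0..d}"

definition wheel_E :: "nat \<Rightarrow> nat set set" where
  "wheel_E d = {{0, i} | i. 1 \<le> i \<and> i \<le> d} \<union> {{i, i mod d + 1} | i. 1 \<le> i \<and> i \<le> d}"

definition fan_V :: "nat \<Rightarrow> nat set" where
  "fan_V t = {1..t}"

definition fan_E :: "nat \<Rightarrow> nat set set" where
  "fan_E t = {{i, i mod t + 1} | i. 1 \<le> i \<and> i \<le> t} \<union> {{1, i} | i. 3 \<le> i \<and> i \<le> t - 1}"

definition has_rainbow_copy ::
  "nat set \<Rightarrow> nat set set \<Rightarrow> (nat set \<Rightarrow> 'c) \<Rightarrow> nat set \<Rightarrow> nat set set \<Rightarrow> bool" where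
  "has_rainbow_copy VG EG c VH EH \<longleftrightarrow>
     (\<exists>f. inj_on f VH \<and> f ` VH \<subseteq> VG \<and> (\<forall>e\<in>EH. f ` e \<in> EG)
          \<and> inj_on (\<lambda>e. c (f ` e)) EH)"

definition rb :: "nat set \<Rightarrow> nat set set \<Rightarrow> nat set \<Rightarrow> nat set set \<Rightarrow> nat" where
  "rb VG EG VH EH = (LEAST k. \<forall>c :: nat set \<Rightarrow> nat.
       card (c ` EG) \<ge> k \<longrightarrow> has_rainbow_copy VG EG c VH EH)"

end

theory Submission
  imports Defs
begin

(* Colour the spoke to rim vertex i with i, and the rim edge leaving i with i as well
   when i is marked, i.e. i = 1 (mod t - 2), and with the fresh colour d + i otherwise.
   This uses 2d - ceil(d / (t - 2)) >= floor((2t - 5) d / (t - 2)) colours.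
   A rainbow copy of F_t has t vertices and 2t - 3 edges. Without the hub it could use
   at most t rim edges. With the hub, at least t - 2 rim vertices carry both their spoke
   and their outgoing rim edge, so they are unmarked; as these rim edges stay inside the
   t - 1 rim vertices of the copy, they form a run of t - 2 consecutive unmarked vertices,
   which cannot exist: the distance to the next marked vertex drops by one along each rim
   edge of the run but never exceeds t - 3. *)

lemma card_image_less_rb:
  fixes c :: "nat set \<Rightarrow> nat"
  assumes "finite EG" and "\<not> has_rainbow_copy VG EG c VH EH"
  shows "card (c ` EG) < rb VG EG VH EH"
proof (rule ccontr)
  let ?P = "\<lambda>k. \<forall>c :: nat set \<Rightarrow> nat.
    card (c ` EG) \<ge> k \<longrightarrow> has_rainbow_copy VG EG c VH EH"
  assume "\<not> card (c ` EG) < rb VG EG VH EH"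
  then have rb_le: "rb VG EG VH EH \<le> card (c ` EG)" by simp
  have "?P (card EG + 1)"
  proof (intro allI impI)
    fix c' :: "nat set \<Rightarrow> nat"
    assume "card EG + 1 \<le> card (c' ` EG)"
    with card_image_le[OF assms(1), of c'] show "has_rainbow_copy VG EG c' VH EH" by simp
  qed
  then have "?P (rb VG EG VH EH)" unfolding rb_def by (rule LeastI)
  then show False using rb_le assms(2) by blast
qed

lemma rainbow_copy_edge_set:
  assumes "has_rainbow_copy VG EG c VH EH" and "\<And>e. e \<in> EH \<Longrightarrow> e \<subseteq> VH"
  obtains U S where "U \<subseteq> VG" "card U = card VH" "S \<subseteq> EG" "card S = card EH"
    "\<forall>s\<in>S. s \<subseteq> U" "inj_on c S"
proof -
  from assms(1) obtain f where f: "inj_on f VH" "f ` VH \<subseteq> VG" "\<forall>e\<in>EH. f ` e \<in> EG"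
    and rainbow: "inj_on (\<lambda>e. c (f ` e)) EH"
    unfolding has_rainbow_copy_def by blast
  have inj: "inj_on (image f) EH" "inj_on c (image f ` EH)"
    using inj_on_imageI2[of "\<lambda>e. c e" "image f" EH] inj_on_imageI[of c "image f" EH] rainbow
    by (simp_all add: comp_def)
  show thesis
  proof (rule that)
    show "card (f ` VH) = card VH" "card (image f ` EH) = card EH"
      using f(1) inj(1) by (simp_all add: card_image)
    show "\<forall>s\<in>image f ` EH. s \<subseteq> f ` VH" using assms(2) by blast
  qed (use f inj(2) in blast)+
qed

lemma spoke_in_wheel_E: "1 \<le> i \<Longrightarrow> i \<le> d \<Longrightarrow> {0, i} \<in> wheel_E d"
  unfolding wheel_E_def by blast

lemma rim_edge_in_wheel_E: "1 \<le> j \<Longrightarrow> j \<le> d \<Longrightarrow> {j, j mod d + 1} \<in> wheel_E d"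
  unfolding wheel_E_def by blast

lemma wheel_E_cases:
  assumes "e \<in> wheel_E d"
  obtains i where "1 \<le> i" "i \<le> d" "e = {0, i}"
    | j where "1 \<le> j" "j \<le> d" "e = {j, j mod d + 1}"
  using assms unfolding wheel_E_def by blast

lemma finite_wheel_E: "finite (wheel_E d)"
  unfolding wheel_E_def by auto

lemma cycle_edge_in_fan_E: "1 \<le> i \<Longrightarrow> i \<le> t \<Longrightarrow> {i, i mod t + 1} \<in> fan_E t"
  unfolding fan_E_def by blast

lemma chord_in_fan_E: "3 \<le> i \<Longrightarrow> i \<le> t - 1 \<Longrightarrow> {1, i} \<in> fan_E t"
  unfolding fan_E_def by blast

lemma fan_E_subset: "e \<in> fan_E t \<Longrightarrow> e \<subseteq> fan_V t"
  unfolding fan_E_def fan_V_def by (auto simp: Suc_le_eq)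

lemma card_fan_E_ge:
  assumes "2 \<le> t"
  shows "2 * t - 3 \<le> card (fan_E t)"
proof -
  define star where "star = (\<lambda>i. {1, i}) ` {2..t}"
  define path where "path = (\<lambda>i. {i, i + 1}) ` {2..t - 1}"
  have "{1, i} \<in> fan_E t" if i: "2 \<le> i" "i \<le> t" for i
  proof -
    consider "i = 2" | "i = t" | "3 \<le> i" "i \<le> t - 1" using i by linarith
    then show ?thesis
    proof cases
      case 1
      then show ?thesis using cycle_edge_in_fan_E[of 1 t] assms by (simp add: numeral_2_eq_2)
    next
      case 2
      then show ?thesis using cycle_edge_in_fan_E[of t t] assms by (simp add: insert_commute)
    qed (rule chord_in_fan_E)
  qed
  moreover have "{i, i + 1} \<in> fan_E t" if "2 \<le> i" "i \<le> t - 1" for i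
    using cycle_edge_in_fan_E[of i t] that by simp
  ultimately have "star \<union> path \<subseteq> fan_E t" unfolding star_def path_def by auto
  moreover have "finite (fan_E t)" unfolding fan_E_def by auto
  ultimately have "card (star \<union> path) \<le> card (fan_E t)" by (rule card_mono[rotated])
  moreover have "card (star \<union> path) = card star + card path"
  proof (rule card_Un_disjoint)
    show "star \<inter> path = {}" unfolding star_def path_def by force
  qed (simp_all add: star_def path_def)
  moreover have "card star = t - 1" "card path = t - 2"
    unfolding star_def path_def by (subst card_image; auto simp: inj_on_def doubleton_eq_iff)+
  ultimately show ?thesis by linarith
qed

lemma nat_floor_divide_times:
  "nat \<lfloor>real a / real p * real d\<rfloor> = a * d div p"
proof -
  have "real a / real p * real d = real (a * d) / real p" by simp
  then show ?thesis by (simp only: floor_divide_of_nat_eq nat_int)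
qed

lemma div_add_div_le_double:
  fixes p d :: nat
  assumes "p > 0" "d > 0"
  shows "(2 * p - 1) * d div p + ((d - 1) div p + 1) \<le> 2 * d"
proof -
  define q where "q = (d - 1) div p"
  have "q * p < d" unfolding q_def using div_times_less_eq_dividend[of "d - 1" p] assms(2) by linarith
  moreover have "d \<le> 2 * (d * p)" using assms(1) by simp
  moreover have "(2 * p - 1) * d = 2 * (d * p) - d" "(2 * d - q) * p = 2 * (d * p) - q * p"
    by (simp_all add: diff_mult_distrib algebra_simps)
  ultimately have "(2 * p - 1) * d < (2 * d - q) * p" by linarith
  then have "(2 * p - 1) * d div p < 2 * d - q" by (rule less_mult_imp_div_less)
  then show ?thesis unfolding q_def[symmetric] by linarith
qed

lemma card_le_of_potential_descent:
  fixes g :: "'a \<Rightarrow> nat"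
  assumes "finite R" "K \<subseteq> R" "s ` K \<subseteq> R" "inj_on s K" "card R \<le> card K + 1"
    and bounded: "\<And>x. x \<in> R \<Longrightarrow> g x \<le> b"
    and descent: "\<And>j. j \<in> K \<Longrightarrow> g (s j) + 1 = g j"
  shows "card K \<le> b"
proof -
  have "finite (s ` K)" using assms(3,1) by (rule finite_subset)
  then have "card (R - s ` K) = card R - card K"
    using card_Diff_subset[OF _ assms(3)] card_image[OF assms(4)] by simp
  then have "card (R - s ` K) * b \<le> 1 * b" using assms(5) by (intro mult_le_mono1) linarith
  moreover have "sum g (R - s ` K) \<le> card (R - s ` K) * b"
    using sum_bounded_above[of "R - s ` K" g b] bounded by simp
  ultimately have rest: "sum g (R - s ` K) \<le> b" by linarith
  have "sum g (s ` K) + card K = sum (\<lambda>j. g (s j) + 1) K"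
    unfolding sum.distrib sum.reindex[OF assms(4)] by simp
  also have "\<dots> = sum g K" using descent by simp
  also have "\<dots> \<le> sum g R" using assms(1,2) by (rule sum_mono2) simp
  also have "\<dots> = sum g (s ` K) + sum g (R - s ` K)"
    using sum.subset_diff[OF assms(3,1)] by (simp add: add.commute)
  finally show ?thesis using rest by linarith
qed

lemma mod_complement_Suc:
  fixes n p :: nat
  assumes "p > 0" "n mod p \<noteq> 0"
  shows "(p - Suc n mod p) mod p + 1 = (p - n mod p) mod p"
proof -
  define x where "x = n mod p"
  have x: "0 < x" "x < p" using assms unfolding x_def by simp_all
  have "Suc n mod p = (if Suc x = p then 0 else Suc x)" unfolding x_def by (rule mod_Suc)
  then show ?thesis using x unfolding x_def[symmetric] by auto
qed

definition rim_marked :: "nat \<Rightarrow> nat \<Rightarrow> bool" where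
  "rim_marked p j \<longleftrightarrow> (j - 1) mod p = 0"

definition rim_colour :: "nat \<Rightarrow> nat \<Rightarrow> nat \<Rightarrow> nat" where
  "rim_colour p d j = (if rim_marked p j then j else d + j)"

(* The rim edge {d, 1} is the one leaving rim vertex d, hence the special case. *)
definition wheel_colouring :: "nat \<Rightarrow> nat \<Rightarrow> nat set \<Rightarrow> nat" where
  "wheel_colouring p d e =
     (if 0 \<in> e then Max e else if e = {1, d} then rim_colour p d d else rim_colour p d (Min e))"

lemma wheel_colouring_spoke: "1 \<le> i \<Longrightarrow> wheel_colouring p d {0, i} = i"
  unfolding wheel_colouring_def by simp

lemma wheel_colouring_rim_edge:
  assumes "3 \<le> d" "1 \<le> j" "j \<le> d"
  shows "wheel_colouring p d {j, j mod d + 1} = rim_colour p d j"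
proof (cases "j = d")
  case True
  then have "{j, j mod d + 1} = {1, d}" by auto
  then show ?thesis using True assms unfolding wheel_colouring_def by auto
next
  case False
  then have "j mod d + 1 = j + 1" "{j, j + 1} \<noteq> {1, d}"
    using assms by (auto simp: doubleton_eq_iff)
  then show ?thesis using assms unfolding wheel_colouring_def by auto
qed

lemma card_rim_marked_le:
  assumes "p > 0"
  shows "card {j \<in> {1..d}. rim_marked p j} \<le> (d - 1) div p + 1"
proof -
  have "{j \<in> {1..d}. rim_marked p j} \<subseteq> (\<lambda>k. k * p + 1) ` {..(d - 1) div p}"
  proof
    fix j assume j: "j \<in> {j \<in> {1..d}. rim_marked p j}"
    then have "j - 1 = (j - 1) div p * p"
      using div_mult_mod_eq[of "j - 1" p] by (simp add: rim_marked_def)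
    then have "j = (j - 1) div p * p + 1" using j by simp
    moreover have "(j - 1) div p \<le> (d - 1) div p" using j by (auto intro: div_le_mono)
    ultimately show "j \<in> (\<lambda>k. k * p + 1) ` {..(d - 1) div p}" by blast
  qed
  then have "card {j \<in> {1..d}. rim_marked p j} \<le> card ((\<lambda>k. k * p + 1) ` {..(d - 1) div p})"
    by (intro card_mono) auto
  also have "\<dots> \<le> (d - 1) div p + 1" using card_image_le[of "{..(d - 1) div p}"] by simp
  finally show ?thesis .
qed

lemma card_wheel_colouring_ge:
  assumes "3 \<le> d"
  shows "2 * d - card {j \<in> {1..d}. rim_marked p j} \<le> card (wheel_colouring p d ` wheel_E d)"
proof -
  define unmarked where "unmarked = {j \<in> {1..d}. \<not> rim_marked p j}"
  have "card unmarked + card {j \<in> {1..d}. rim_marked p j}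
      = card (unmarked \<union> {j \<in> {1..d}. rim_marked p j})"
    by (rule card_Un_disjoint[symmetric]) (auto simp: unmarked_def)
  also have "unmarked \<union> {j \<in> {1..d}. rim_marked p j} = {1..d}" unfolding unmarked_def by blast
  finally have "card unmarked + card {j \<in> {1..d}. rim_marked p j} = d" by simp
  moreover have "{1..d} \<union> (\<lambda>j. d + j) ` unmarked \<subseteq> wheel_colouring p d ` wheel_E d"
  proof -
    have "i \<in> wheel_colouring p d ` wheel_E d" if "i \<in> {1..d}" for i
      using that spoke_in_wheel_E[of i d] wheel_colouring_spoke[of i p d] by force
    moreover have "d + j \<in> wheel_colouring p d ` wheel_E d" if "j \<in> unmarked" for j
      using that rim_edge_in_wheel_E[of j d] wheel_colouring_rim_edge[OF assms, of j p]
      unfolding unmarked_def rim_colour_def by force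
    ultimately show ?thesis by blast
  qed
  then have "card ({1..d} \<union> (\<lambda>j. d + j) ` unmarked) \<le> card (wheel_colouring p d ` wheel_E d)"
    by (intro card_mono) (simp_all add: finite_wheel_E)
  moreover have "card ({1..d} \<union> (\<lambda>j. d + j) ` unmarked) = d + card unmarked"
    by (subst card_Un_disjoint) (auto simp: unmarked_def card_image)
  ultimately show ?thesis by linarith
qed

(* The number of rim steps from j to the next marked vertex, where the marked vertex 1
   is reached from the end of the rim as d + 1. *)
definition dist_to_mark :: "nat \<Rightarrow> nat \<Rightarrow> nat \<Rightarrow> nat" where
  "dist_to_mark p d j = min ((p - (j - 1) mod p) mod p) (d + 1 - j)"

lemma dist_to_mark_le:
  assumes "p > 0"
  shows "dist_to_mark p d j \<le> p - 1"
proof -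
  have "(p - (j - 1) mod p) mod p < p" using assms by (rule mod_less_divisor)
  then show ?thesis unfolding dist_to_mark_def by linarith
qed

lemma dist_to_mark_rim_succ:
  assumes "p > 0" "1 \<le> j" "j \<le> d" "\<not> rim_marked p j"
  shows "dist_to_mark p d (j mod d + 1) + 1 = dist_to_mark p d j"
proof (cases "j = d")
  case True
  have "(j - 1) mod p < p" "(j - 1) mod p \<noteq> 0"
    using assms unfolding rim_marked_def by simp_all
  then have "(p - (j - 1) mod p) mod p \<noteq> 0" by simp
  then show ?thesis using True unfolding dist_to_mark_def by simp
next
  case False
  then have "j mod d + 1 = Suc (j - 1) + 1" using assms by simp
  moreover have "(p - Suc (j - 1) mod p) mod p + 1 = (p - (j - 1) mod p) mod p"
    using assms unfolding rim_marked_def by (intro mod_complement_Suc) simp_all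
  moreover have "d + 1 - (j + 1) + 1 = d + 1 - j" using False assms by simp
  ultimately show ?thesis using assms unfolding dist_to_mark_def by (simp add: min_def)
qed

lemma inj_on_rim_succ: "inj_on (\<lambda>j. j mod d + 1) {1..d :: nat}"
proof (rule inj_onI)
  fix x y assume "x \<in> {1..d}" "y \<in> {1..d}" "x mod d + 1 = y mod d + 1"
  moreover have "j mod d = (if j = d then 0 else j)" if "j \<in> {1..d}" for j
    using that by auto
  ultimately show "x = y" by (auto split: if_splits)
qed

lemma card_unmarked_rim_run_less:
  assumes "p > 0" "finite R" "R \<subseteq> {1..d}" "K \<subseteq> R" "(\<lambda>j. j mod d + 1) ` K \<subseteq> R"
    and "card R \<le> card K + 1" and "\<forall>j\<in>K. \<not> rim_marked p j"
  shows "card K < p"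
proof -
  have "card K \<le> p - 1"
  proof (rule card_le_of_potential_descent[where g = "dist_to_mark p d"])
    show "inj_on (\<lambda>j. j mod d + 1) K"
      by (rule inj_on_subset[OF inj_on_rim_succ]) (use assms(3,4) in blast)
    show "dist_to_mark p d x \<le> p - 1" for x using assms(1) by (rule dist_to_mark_le)
    show "dist_to_mark p d (j mod d + 1) + 1 = dist_to_mark p d j" if "j \<in> K" for j
      using that assms by (intro dist_to_mark_rim_succ) auto
  qed (use assms in auto)
  then show ?thesis using assms(1) by linarith
qed

lemma card_le_spokes_plus_rim_edges:
  assumes "S \<subseteq> wheel_E d"
  shows "card S \<le> card {i \<in> {1..d}. {0, i} \<in> S} + card {j \<in> {1..d}. {j, j mod d + 1} \<in> S}"
proof -
  let ?A = "{i \<in> {1..d}. {0, i} \<in> S}" and ?J = "{j \<in> {1..d}. {j, j mod d + 1} \<in> S}"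
  have "S \<subseteq> (\<lambda>i. {0, i}) ` ?A \<union> (\<lambda>j. {j, j mod d + 1}) ` ?J"
  proof
    fix e assume "e \<in> S"
    with assms have "e \<in> wheel_E d" by blast
    then show "e \<in> (\<lambda>i. {0, i}) ` ?A \<union> (\<lambda>j. {j, j mod d + 1}) ` ?J"
      by (rule wheel_E_cases) (use \<open>e \<in> S\<close> in auto)
  qed
  then have "card S \<le> card ((\<lambda>i. {0, i}) ` ?A \<union> (\<lambda>j. {j, j mod d + 1}) ` ?J)"
    by (intro card_mono) auto
  also have "\<dots> \<le> card ((\<lambda>i. {0, i}) ` ?A) + card ((\<lambda>j. {j, j mod d + 1}) ` ?J)"
    by (rule card_Un_le)
  also have "\<dots> \<le> card ?A + card ?J"
    by (intro add_mono card_image_le) auto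
  finally show ?thesis .
qed

lemma rainbow_spoke_and_rim_edge_unmarked:
  assumes "3 \<le> d" "1 \<le> j" "j \<le> d" and rainbow: "inj_on (wheel_colouring p d) S"
    and "{0, j} \<in> S" "{j, j mod d + 1} \<in> S"
  shows "\<not> rim_marked p j"
proof
  assume "rim_marked p j"
  then have "wheel_colouring p d {0, j} = wheel_colouring p d {j, j mod d + 1}"
    using wheel_colouring_rim_edge[OF assms(1-3), of p] assms(2)
    by (simp add: wheel_colouring_spoke rim_colour_def)
  then have "{0, j} = {j, j mod d + 1}" by (rule inj_onD[OF rainbow _ assms(5,6)])
  then show False using assms(2) by (simp add: doubleton_eq_iff)
qed

lemma wheel_colouring_rainbow_edges_less:
  fixes t :: nat
  assumes "4 \<le> t" "3 \<le> d" "U \<subseteq> {0..d}" "card U = t" "S \<subseteq> wheel_E d" "\<forall>e\<in>S. e \<subseteq> U"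
    and rainbow: "inj_on (wheel_colouring (t - 2) d) S"
  shows "card S < 2 * t - 3"
proof (rule ccontr)
  let ?succ = "\<lambda>j. j mod d + 1"
  define A where "A = {i \<in> {1..d}. {0, i} \<in> S}"
  define J where "J = {j \<in> {1..d}. {j, ?succ j} \<in> S}"
  assume "\<not> card S < 2 * t - 3"
  then have AJ: "2 * t - 3 \<le> card A + card J"
    using card_le_spokes_plus_rim_edges[OF assms(5)] unfolding A_def J_def by linarith
  have "finite U" using assms(3) by (rule finite_subset) simp
  have "A \<subseteq> U - {0}" unfolding A_def using assms(6) by auto
  have "J \<subseteq> U - {0}" unfolding J_def using assms(6) by auto
  have "?succ ` J \<subseteq> U - {0}" unfolding J_def using assms(6) by auto
  show False
  proof (cases "0 \<in> U")
    case False
    then have "A = {}" unfolding A_def using assms(6) by blast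
    moreover have "card J \<le> card U" using \<open>finite U\<close> \<open>J \<subseteq> U - {0}\<close> by (intro card_mono) auto
    ultimately show False using AJ assms(1,4) by simp
  next
    case True
    define R where "R = U - {0}"
    have R: "finite R" "card R = t - 1" "R \<subseteq> {1..d}"
      using \<open>finite U\<close> True assms(3,4) unfolding R_def by auto
    have "finite A" "finite J" unfolding A_def J_def by simp_all
    then have "card A + card J = card (A \<union> J) + card (A \<inter> J)" by (rule card_Un_Int)
    moreover have "card (A \<union> J) \<le> card R"
      using \<open>A \<subseteq> U - {0}\<close> \<open>J \<subseteq> U - {0}\<close> by (intro card_mono[OF R(1)]) (simp add: R_def)
    ultimately have "t - 2 \<le> card (A \<inter> J)" using AJ R(2) assms(1) by linarith
    moreover have "card (A \<inter> J) < t - 2"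
    proof (rule card_unmarked_rim_run_less)
      show "0 < t - 2" using assms(1) by simp
      show "finite R" "R \<subseteq> {1..d}" by (fact R)+
      show "A \<inter> J \<subseteq> R" using \<open>A \<subseteq> U - {0}\<close> unfolding R_def by blast
      show "?succ ` (A \<inter> J) \<subseteq> R" using \<open>?succ ` J \<subseteq> U - {0}\<close> unfolding R_def by blast
      show "card R \<le> card (A \<inter> J) + 1" using R(2) \<open>t - 2 \<le> card (A \<inter> J)\<close> by linarith
      show "\<forall>j\<in>A \<inter> J. \<not> rim_marked (t - 2) j"
        using rainbow_spoke_and_rim_edge_unmarked[OF assms(2) _ _ rainbow]
        unfolding A_def J_def by auto
    qed
    ultimately show False by linarith
  qed
qed

lemma wheel_colouring_no_rainbow_fan:
  assumes "4 \<le> t" "3 \<le> d"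
  shows "\<not> has_rainbow_copy (wheel_V d) (wheel_E d) (wheel_colouring (t - 2) d) (fan_V t) (fan_E t)"
proof
  assume "has_rainbow_copy (wheel_V d) (wheel_E d) (wheel_colouring (t - 2) d) (fan_V t) (fan_E t)"
  then obtain U S where U: "U \<subseteq> wheel_V d" "card U = card (fan_V t)"
    and S: "S \<subseteq> wheel_E d" "card S = card (fan_E t)" "\<forall>e\<in>S. e \<subseteq> U"
    and rainbow: "inj_on (wheel_colouring (t - 2) d) S"
    by (rule rainbow_copy_edge_set[OF _ fan_E_subset])
  have "card S < 2 * t - 3"
    using U S(1,3) rainbow unfolding wheel_V_def fan_V_def
    by (intro wheel_colouring_rainbow_edges_less[OF assms]) simp_all
  then have "card (fan_E t) < 2 * t - 3" using S(2) by simp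
  moreover have "2 * t - 3 \<le> card (fan_E t)" using assms(1) by (intro card_fan_E_ge) simp
  ultimately show False by simp
qed

theorem theorem4p1:
  fixes d t :: nat
  assumes "t \<ge> 4" and "d \<ge> t - 1"
  shows "rb (wheel_V d) (wheel_E d) (fan_V t) (fan_E t)
           \<ge> nat \<lfloor>(real (2 * t - 5) / real (t - 2)) * real d\<rfloor> + 1"
proof -
  let ?p = "t - 2"
  have "3 \<le> d" "0 < ?p" "2 * t - 5 = 2 * ?p - 1" using assms by linarith+
  then have "nat \<lfloor>(real (2 * t - 5) / real (t - 2)) * real d\<rfloor> = (2 * ?p - 1) * d div ?p"
    by (simp only: nat_floor_divide_times)
  also have "\<dots> \<le> 2 * d - ((d - 1) div ?p + 1)"
    using div_add_div_le_double[of ?p d] \<open>3 \<le> d\<close> \<open>0 < ?p\<close> by linarith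
  also have "\<dots> \<le> 2 * d - card {j \<in> {1..d}. rim_marked ?p j}"
    using card_rim_marked_le[OF \<open>0 < ?p\<close>] by (rule diff_le_mono2)
  also have "\<dots> \<le> card (wheel_colouring ?p d ` wheel_E d)"
    using \<open>3 \<le> d\<close> by (rule card_wheel_colouring_ge)
  also have "\<dots> < rb (wheel_V d) (wheel_E d) (fan_V t) (fan_E t)"
    using finite_wheel_E wheel_colouring_no_rainbow_fan[OF assms(1) \<open>3 \<le> d\<close>]
    by (rule card_image_less_rb)
  finally show ?thesis by simp
qed

end
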